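(* For each integer $q\ge2$, let $\rho_q$ be the unique number in $(0,1)$ satisfying $\rho_q+\rho_q^2+\dots+\rho_q^{q-1}=\frac{q-1}{3}(1+2\rho_q^q)$, and let $\gamma_q:=\ln(1-\rho_q^q)-\ln(1-\rho_q)-\frac{q-1}{3}\ln(\rho_q)$. Then $\lim_{q\to\infty}\frac{\gamma_q}{\ln q}=1$. *)

theory Defs
  imports "HOL-Analysis.Analysis"
begin

definition rho :: "nat \<Rightarrow> real" where
  "rho q = (THE x. 0 < x \<and> x < 1 \<and>
      (\<Sum>i=1..q-1. x ^ i) = (real q - 1) / 3 * (1 + 2 * x ^ q))"

definition gamma :: "nat \<Rightarrow> real" where
  "gamma q = ln (1 - rho q ^ q) - ln (1 - rho q) - (real q - 1) / 3 * ln (rho q)"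

end

theory Submission
  imports Defs
begin

text \<open>
  Write q = n + 1. Moving everything in the defining equation of \<open>\<rho>\<^sub>q\<close> to one side,
  multiplying by 3 and dividing by 1 - x turns it into the polynomial equation
  \<open>(\<Sum>j\<le>n. (3j - n) x\<^sup>j) = 0\<close>. Its coefficients change sign exactly once, so by a
  Descartes-type argument it has only one positive root, and comparing signs at \<open>1 - 4/n\<close> and
  \<open>1 - 1/n\<close> places that root in between. Hence \<open>1 - \<rho>\<^sub>q\<close> is of order \<open>1/q\<close>, while
  \<open>\<rho>\<^sub>q\<^sup>q \<le> (1 - 1/n)\<^sup>n \<le> e\<^sup>-\<^sup>1\<close> and \<open>q ln \<rho>\<^sub>q\<close> stays bounded, so \<open>\<gamma>\<^sub>q = ln q + O(1)\<close>.
\<close>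

definition rho_poly :: "nat \<Rightarrow> real \<Rightarrow> real" where
  "rho_poly n x = (\<Sum>j\<le>n. (3 * real j - real n) * x ^ j)"

lemma one_minus_times_rho_poly:
  "(1 - x) * rho_poly n x = 3 * (\<Sum>i=1..n. x ^ i) - real n * (1 + 2 * x ^ Suc n)"
proof (induction n)
  case 0
  show ?case
    by (simp add: rho_poly_def)
next
  case (Suc n)
  have recurrence: "rho_poly (Suc n) x = rho_poly n x - (\<Sum>j\<le>n. x ^ j) + (2 * real n + 2) * x ^ Suc n"
    unfolding rho_poly_def by (simp add: sum.distrib sum_subtractf algebra_simps)
  have "(1 - x) * rho_poly (Suc n) x
      = (1 - x) * rho_poly n x - (1 - x) * (\<Sum>j\<le>n. x ^ j) + (1 - x) * (2 * real n + 2) * x ^ Suc n"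
    unfolding recurrence by algebra
  also have "\<dots> = 3 * (\<Sum>i=1..n. x ^ i) - real n * (1 + 2 * x ^ Suc n) - (1 - x ^ Suc n)
      + (1 - x) * (2 * real n + 2) * x ^ Suc n"
    by (simp only: Suc.IH sum_gp_basic)
  finally show ?case
    by (simp add: algebra_simps)
qed

lemma rho_equation_iff_rho_poly:
  assumes "x \<noteq> 1"
  shows "(\<Sum>i=1..Suc n - 1. x ^ i) = (real (Suc n) - 1) / 3 * (1 + 2 * x ^ Suc n)
    \<longleftrightarrow> rho_poly n x = 0"
proof -
  have "rho_poly n x = 0 \<longleftrightarrow> (1 - x) * rho_poly n x = 0"
    using assms by simp
  then show ?thesis
    unfolding one_minus_times_rho_poly by auto
qed

lemma one_minus_sq_times_rho_poly:
  "(1 - x)\<^sup>2 * rho_poly n x = 3 * (x - x ^ Suc n) - real n * (1 - x) * (1 + 2 * x ^ Suc n)"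
proof -
  have geometric: "(1 - x) * (\<Sum>i=1..n. x ^ i) = x - x ^ Suc n"
    using sum_gp_multiplied[of 1 n x] by (cases n) simp_all
  have "(1 - x)\<^sup>2 * rho_poly n x = (1 - x) * ((1 - x) * rho_poly n x)"
    by (simp add: power2_eq_square)
  also have "\<dots> = 3 * ((1 - x) * (\<Sum>i=1..n. x ^ i)) - real n * (1 - x) * (1 + 2 * x ^ Suc n)"
    by (simp only: one_minus_times_rho_poly) algebra
  finally show ?thesis
    unfolding geometric .
qed

lemma sign_change_poly_compare:
  fixes c :: "nat \<Rightarrow> real" and x z :: real
  assumes neg: "\<And>j. j < m \<Longrightarrow> c j \<le> 0" and nonneg: "\<And>j. m \<le> j \<Longrightarrow> 0 \<le> c j"
    and "c 0 < 0" "0 < x" "x < z"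
  shows "z ^ m * (\<Sum>j\<le>n. c j * x ^ j) < x ^ m * (\<Sum>j\<le>n. c j * z ^ j)"
proof -
  have "0 < m"
    using nonneg[of 0] \<open>c 0 < 0\<close> by (cases m) auto
  have pow_le: "x ^ d \<le> z ^ d" for d
    using assms by (intro power_mono) auto
  have term_le: "c j * (z ^ m * x ^ j - x ^ m * z ^ j) \<le> 0" for j
  proof (cases "j < m")
    case True
    then obtain d where d: "m = j + d"
      by (metis less_imp_add_positive)
    have "x ^ j * z ^ j * x ^ d \<le> x ^ j * z ^ j * z ^ d"
      using assms pow_le by (intro mult_left_mono) auto
    then have "0 \<le> z ^ m * x ^ j - x ^ m * z ^ j"
      unfolding d by (simp add: power_add algebra_simps)
    with neg[OF True] show ?thesis
      by (simp add: mult_nonpos_nonneg)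
  next
    case False
    then obtain d where d: "j = m + d"
      by (metis le_iff_add not_less)
    have "x ^ m * z ^ m * x ^ d \<le> x ^ m * z ^ m * z ^ d"
      using assms pow_le by (intro mult_left_mono) auto
    then have "z ^ m * x ^ j - x ^ m * z ^ j \<le> 0"
      unfolding d by (simp add: power_add algebra_simps)
    with nonneg[of j] False show ?thesis
      by (simp add: mult_nonneg_nonpos)
  qed
  have "x ^ m < z ^ m"
    using assms \<open>0 < m\<close> by (intro power_strict_mono) auto
  then have term0: "c 0 * (z ^ m * x ^ 0 - x ^ m * z ^ 0) < 0"
    using \<open>c 0 < 0\<close> by (simp add: mult_neg_pos)
  have "z ^ m * (\<Sum>j\<le>n. c j * x ^ j) - x ^ m * (\<Sum>j\<le>n. c j * z ^ j)
      = (\<Sum>j\<le>n. c j * (z ^ m * x ^ j - x ^ m * z ^ j))"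
    by (simp add: sum_distrib_left sum_subtractf algebra_simps)
  also have "\<dots> < (\<Sum>j\<le>n. 0)"
  proof (rule sum_strict_mono_ex1)
    show "\<forall>j\<in>{..n}. c j * (z ^ m * x ^ j - x ^ m * z ^ j) \<le> 0"
      using term_le by simp
    show "\<exists>j\<in>{..n}. c j * (z ^ m * x ^ j - x ^ m * z ^ j) < 0"
      using term0 by (intro bexI[of _ 0]) simp_all
  qed simp
  finally show ?thesis
    by simp
qed

lemma sign_change_poly_positive_root_unique:
  fixes c :: "nat \<Rightarrow> real"
  assumes "\<And>j. j < m \<Longrightarrow> c j \<le> 0" "\<And>j. m \<le> j \<Longrightarrow> 0 \<le> c j" "c 0 < 0"
    and "0 < a" "0 < b" "(\<Sum>j\<le>n. c j * a ^ j) = 0" "(\<Sum>j\<le>n. c j * b ^ j) = 0"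
  shows "a = b"
proof (rule ccontr)
  assume "a \<noteq> b"
  then consider "a < b" | "b < a"
    by linarith
  then show False
  proof cases
    case 1
    then show False
      using sign_change_poly_compare[of m c a b n] assms by simp
  next
    case 2
    then show False
      using sign_change_poly_compare[of m c b a n] assms by simp
  qed
qed

lemma rho_poly_positive_root_unique:
  assumes "1 \<le> n" "0 < a" "0 < b" "rho_poly n a = 0" "rho_poly n b = 0"
  shows "a = b"
proof (rule sign_change_poly_positive_root_unique)
  let ?m = "(n + 2) div 3"
  show "3 * real j - real n \<le> 0" if "j < ?m" for j
    using that by linarith
  show "0 \<le> 3 * real j - real n" if "?m \<le> j" for j
    using that by linarith
qed (use assms in \<open>auto simp: rho_poly_def\<close>)

lemma rho_eqI:
  assumes "1 \<le> n" "0 < r" "r < 1" "rho_poly n r = 0"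
  shows "rho (Suc n) = r"
  unfolding rho_def
proof (rule the_equality)
  show "0 < r \<and> r < 1 \<and> (\<Sum>i=1..Suc n - 1. r ^ i) = (real (Suc n) - 1) / 3 * (1 + 2 * r ^ Suc n)"
    using assms rho_equation_iff_rho_poly by simp
next
  fix x
  assume "0 < x \<and> x < 1 \<and> (\<Sum>i=1..Suc n - 1. x ^ i) = (real (Suc n) - 1) / 3 * (1 + 2 * x ^ Suc n)"
  then show "x = r"
    using rho_equation_iff_rho_poly rho_poly_positive_root_unique assms by auto
qed

lemma exp_minus_one_le: "exp (-1::real) \<le> 10/27"
proof -
  have "27/10 \<le> exp (1::real)"
    using e_approx_32 by (simp add: abs_if split: if_split_asm)
  then show ?thesis
    by (simp add: exp_minus field_simps)
qed

lemma one_minus_inverse_power_le: "1 \<le> n \<Longrightarrow> (1 - 1 / real n) ^ n \<le> 10/27"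
  using exp_ge_one_minus_x_over_n_power_n[of 1 n] exp_minus_one_le by simp

lemma rho_poly_neg: "4 \<le> n \<Longrightarrow> rho_poly n (1 - 4 / real n) < 0"
proof -
  define a where "a = 1 - 4 / real n"
  assume "4 \<le> n"
  then have a: "0 \<le> a" "a < 1" "real n * (1 - a) = 4"
    unfolding a_def by (auto simp: field_simps)
  have "0 \<le> a * a ^ n"
    using a by simp
  moreover have "3 * (a - a ^ Suc n) - real n * (1 - a) * (1 + 2 * a ^ Suc n) = 3 * a - 4 - 11 * (a * a ^ n)"
    unfolding a(3) by (simp add: algebra_simps)
  ultimately have "(1 - a)\<^sup>2 * rho_poly n a < 0"
    unfolding one_minus_sq_times_rho_poly using a by linarith
  then show ?thesis
    unfolding a_def by (simp add: mult_less_0_iff)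
qed

lemma rho_poly_pos: "8 \<le> n \<Longrightarrow> 0 < rho_poly n (1 - 1 / real n)"
proof -
  define b where "b = 1 - 1 / real n"
  assume "8 \<le> n"
  then have b: "7/8 \<le> b" "b < 1" "real n * (1 - b) = 1"
    unfolding b_def by (auto simp: field_simps)
  have "b * b ^ n \<le> b * (10/27)"
    using one_minus_inverse_power_le[of n] \<open>8 \<le> n\<close> b by (intro mult_left_mono) (auto simp: b_def)
  moreover have "3 * (b - b ^ Suc n) - real n * (1 - b) * (1 + 2 * b ^ Suc n) = 3 * b - 1 - 5 * (b * b ^ n)"
    unfolding b(3) by (simp add: algebra_simps)
  ultimately have "0 < 3 * (b - b ^ Suc n) - real n * (1 - b) * (1 + 2 * b ^ Suc n)"
    using b by linarith
  then have "0 < (1 - b)\<^sup>2 * rho_poly n b"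
    unfolding one_minus_sq_times_rho_poly .
  then show ?thesis
    unfolding b_def by (simp add: zero_less_mult_iff)
qed

lemma rho_bounds:
  assumes "8 \<le> n"
  shows "1 - 4 / real n \<le> rho (Suc n)" "rho (Suc n) \<le> 1 - 1 / real n"
proof -
  have "rho_poly n (1 - 4 / real n) \<le> 0" "0 \<le> rho_poly n (1 - 1 / real n)"
    using rho_poly_neg[of n] rho_poly_pos[of n] assms by simp_all
  moreover have "1 - 4 / real n \<le> 1 - 1 / real n"
    by (simp add: divide_right_mono)
  moreover have "continuous_on {1 - 4 / real n..1 - 1 / real n} (rho_poly n)"
    unfolding rho_poly_def by (intro continuous_intros)
  ultimately obtain r where r: "1 - 4 / real n \<le> r" "r \<le> 1 - 1 / real n" "rho_poly n r = 0"
    using IVT' by blast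
  have "4 / real n \<le> 1/2" "0 < 1 / real n"
    using assms by simp_all
  with r have "0 < r" "r < 1"
    by linarith+
  with r assms have "rho (Suc n) = r"
    by (intro rho_eqI) auto
  with r show "1 - 4 / real n \<le> rho (Suc n)" "rho (Suc n) \<le> 1 - 1 / real n"
    by simp_all
qed

lemma ln_one_minus_power_bounds:
  assumes "1 \<le> n" "0 < r" "r \<le> 1 - 1 / real n"
  shows "- ln 2 \<le> ln (1 - r ^ Suc n)" "ln (1 - r ^ Suc n) \<le> 0"
proof -
  have "0 < 1 / real n"
    using assms by simp
  then have "r < 1"
    using assms by linarith
  have "r ^ Suc n \<le> r ^ n"
    by (rule power_decreasing) (use assms \<open>r < 1\<close> in auto)
  also have "\<dots> \<le> (1 - 1 / real n) ^ n"
    by (rule power_mono) (use assms in auto)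
  finally have small: "r ^ Suc n \<le> 1/2"
    using one_minus_inverse_power_le[OF assms(1)] by simp
  then have "ln (1/2) \<le> ln (1 - r ^ Suc n)"
    by (subst ln_le_cancel_iff) auto
  then show "- ln 2 \<le> ln (1 - r ^ Suc n)"
    by (simp add: ln_div)
  show "ln (1 - r ^ Suc n) \<le> 0"
    using small assms by simp
qed

lemma ln_one_minus_bounds:
  assumes "1 \<le> n" "1 - 4 / real n \<le> r" "r \<le> 1 - 1 / real n"
  shows "ln (real n) - 2 * ln 2 \<le> - ln (1 - r)" "- ln (1 - r) \<le> ln (real n)"
proof -
  have "0 < 1 / real n"
    using assms by simp
  then have "r < 1"
    using assms by linarith
  have "ln (1 / real n) \<le> ln (1 - r)"
    using assms \<open>r < 1\<close> by (subst ln_le_cancel_iff) auto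
  moreover have "ln (1 - r) \<le> ln (4 / real n)"
    using assms \<open>r < 1\<close> by (subst ln_le_cancel_iff) auto
  moreover have "ln (4::real) = 2 * ln 2"
    using ln_realpow[of 2 2] by simp
  ultimately show "ln (real n) - 2 * ln 2 \<le> - ln (1 - r)" "- ln (1 - r) \<le> ln (real n)"
    using assms by (simp_all add: ln_div)
qed

lemma scaled_ln_bounds:
  assumes "1 \<le> n" "1 - 4 / real n \<le> r" "1/2 \<le> r" "r \<le> 1"
  shows "- 8 / 3 \<le> real n / 3 * ln r" "real n / 3 * ln r \<le> 0"
proof -
  have "- ln r = ln (1 / r)"
    using assms by (simp add: ln_div)
  also have "\<dots> \<le> (1 - r) * (1 / r)"
    using ln_le_minus_one[of "1 / r"] assms by (simp add: field_simps)
  also have "\<dots> \<le> (4 / real n) * 2"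
    using assms by (intro mult_mono) (auto simp: field_simps)
  finally have "real n / 3 * (- ln r) \<le> real n / 3 * (8 / real n)"
    by (intro mult_left_mono) auto
  then show "- 8 / 3 \<le> real n / 3 * ln r"
    using assms by simp
  show "real n / 3 * ln r \<le> 0"
    using assms by (simp add: mult_nonneg_nonpos)
qed

lemma gamma_minus_ln_bounded:
  assumes "100 \<le> n"
  shows "\<bar>gamma (Suc n) - ln (real (Suc n))\<bar> \<le> 5"
proof -
  define r where "r = rho (Suc n)"
  have n: "1 \<le> n"
    using assms by simp
  have r: "1 - 4 / real n \<le> r" "r \<le> 1 - 1 / real n"
    using rho_bounds assms unfolding r_def by auto
  moreover have "4 / real n \<le> 1/2" "0 < 1 / real n"
    using assms by simp_all
  ultimately have "0 < r" "1/2 \<le> r" "r \<le> 1"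
    by linarith+
  note bounds = ln_one_minus_power_bounds[OF n \<open>0 < r\<close> r(2)] ln_one_minus_bounds[OF n r]
    scaled_ln_bounds[OF n r(1) \<open>1/2 \<le> r\<close> \<open>r \<le> 1\<close>]
  have "ln (real n) \<le> ln (real (Suc n))" "ln (real (Suc n)) \<le> ln (2 * real n)"
    using assms by (subst ln_le_cancel_iff; simp)+
  moreover have "ln (2 * real n) = ln 2 + ln (real n)"
    using assms by (simp add: ln_mult)
  moreover have "gamma (Suc n) = ln (1 - r ^ Suc n) - ln (1 - r) - real n / 3 * ln r"
    unfolding gamma_def r_def by simp
  ultimately show ?thesis
    using bounds \<open>1/2 \<le> r\<close> ln_2_less_1 by linarith
qed

lemma tendsto_divide_one_if_bounded_diff:
  fixes f g :: "'a \<Rightarrow> real"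
  assumes bounded: "eventually (\<lambda>x. \<bar>f x - g x\<bar> \<le> C) F" and g: "filterlim g at_top F"
  shows "((\<lambda>x. f x / g x) \<longlongrightarrow> 1) F"
proof -
  have g_pos: "eventually (\<lambda>x. 0 < g x) F"
    using g by (simp add: filterlim_at_top_dense)
  have "eventually (\<lambda>x. norm ((f x - g x) / g x) \<le> C / g x) F"
    using bounded g_pos by eventually_elim (simp add: divide_right_mono)
  moreover have "((\<lambda>x. C / g x) \<longlongrightarrow> 0) F"
    using g by (intro tendsto_divide_0[OF tendsto_const] filterlim_at_top_imp_at_infinity)
  ultimately have "((\<lambda>x. (f x - g x) / g x) \<longlongrightarrow> 0) F"
    by (rule Lim_null_comparison)
  then have "((\<lambda>x. 1 + (f x - g x) / g x) \<longlongrightarrow> 1 + 0) F"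
    by (intro tendsto_add tendsto_const)
  moreover have "eventually (\<lambda>x. 1 + (f x - g x) / g x = f x / g x) F"
    using g_pos by eventually_elim (simp add: field_simps)
  ultimately show ?thesis
    by (simp add: Lim_transform_eventually)
qed

theorem mainTheorem6:
  shows "(\<lambda>q. gamma q / ln (real q)) \<longlonglongrightarrow> 1"
proof (rule tendsto_divide_one_if_bounded_diff)
  show "eventually (\<lambda>q. \<bar>gamma q - ln (real q)\<bar> \<le> 5) sequentially"
  proof (rule eventually_sequentiallyI)
    fix q :: nat
    assume "101 \<le> q"
    then show "\<bar>gamma q - ln (real q)\<bar> \<le> 5"
      using gamma_minus_ln_bounded[of "q - 1"] by simp
  qed
  show "filterlim (\<lambda>q. ln (real q)) at_top sequentially"
    by (rule filterlim_compose[OF ln_at_top filterlim_real_sequentially])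
qed

end
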